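(* Let $a,b,v$ be integers with $b>a\ge2$ and $v\ge2$, let $u=3$, and set $X:=ab-a-b$. Then $a,b,u,v$ satisfy (1) $a$, $b$ and $3v-1$ are pairwise coprime; (2) $\frac{1}{a}+\frac{1}{b}+\frac{v}{3v-1}>1$; (3) $vab-1=(3v-1)X$, if and only if the triple $(a,b,3v-1)$ is one of $(2,9,5)$, $(2,7,11)$. *)

theory Defs
  imports Complex_Main
begin

end

theory Submission
  imports Defs
begin

text \<open>
  If a \<ge> 3 then, since b \<ge> 4 and v/(3v - 1) \<le> 2/5 for v \<ge> 2, the left-hand side of (2) is
  at most 1/3 + 1/4 + 2/5 = 59/60; hence a = 2. Substituting a = 2, equation (3) becomes
  (v - 1)(b - 6) = 3, whose solutions with v \<ge> 2 are (v, b) = (2, 9) and (4, 7).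
  Coprimality is only needed for the converse, where it is checked directly.
\<close>

lemma div_three_mult_minus_one_le_two_fifths:
  fixes v :: real
  assumes "2 \<le> v"
  shows "v / (3 * v - 1) \<le> 2 / 5"
  using assms by (simp add: divide_simps)

lemma reciprocal_sum_lt_one:
  fixes a b v :: int
  assumes "3 \<le> a" and "a < b" and "2 \<le> v"
  shows "1 / real_of_int a + 1 / real_of_int b + real_of_int v / real_of_int (3 * v - 1) < 1"
proof -
  have "1 / real_of_int a \<le> 1 / 3"
    using assms(1) by (simp add: divide_simps)
  moreover have "1 / real_of_int b \<le> 1 / 4"
    using assms(1,2) by (simp add: divide_simps)
  moreover have "real_of_int v / real_of_int (3 * v - 1) \<le> 2 / 5"
    using div_three_mult_minus_one_le_two_fifths[of "real_of_int v"] assms(3) by simp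
  ultimately show ?thesis
    by linarith
qed

lemma equation_at_a_eq_2_iff:
  fixes b v :: int
  shows "v * 2 * b - 1 = (3 * v - 1) * (2 * b - 2 - b) \<longleftrightarrow> (v - 1) * (b - 6) = 3"
  by (auto simp: algebra_simps)

lemma mult_eq_3_solutions:
  fixes v b :: int
  assumes "2 \<le> v" and "(v - 1) * (b - 6) = 3"
  shows "v = 2 \<and> b = 9 \<or> v = 4 \<and> b = 7"
proof -
  have "v - 1 dvd 3"
    using assms(2) by (metis dvd_triv_left)
  then have "v - 1 \<le> 3"
    by (rule zdvd_imp_le) simp
  moreover have "v \<noteq> 3"
  proof
    assume "v = 3"
    with assms(2) have "2 * (b - 6) = 3"
      by simp
    then show False
      by presburger
  qed
  ultimately have "v = 2 \<or> v = 4"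
    using assms(1) by linarith
  then show ?thesis
    using assms(2) by auto
qed

theorem lemma3p7:
  fixes a b v u X :: int
  assumes "2 \<le> a" and "a < b" and "2 \<le> v"
    and "u = 3" and "X = a * b - a - b"
  shows "(coprime a b \<and> coprime a (u * v - 1) \<and> coprime b (u * v - 1)
          \<and> 1 / real_of_int a + 1 / real_of_int b + real_of_int v / real_of_int (u * v - 1) > 1
          \<and> v * a * b - 1 = (u * v - 1) * X)
     \<longleftrightarrow> (a, b, u * v - 1) \<in> {(2, 9, 5), (2, 7, 11)}"
proof
  assume conditions: "coprime a b \<and> coprime a (u * v - 1) \<and> coprime b (u * v - 1)
          \<and> 1 / real_of_int a + 1 / real_of_int b + real_of_int v / real_of_int (u * v - 1) > 1
          \<and> v * a * b - 1 = (u * v - 1) * X"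
  have a: "a = 2"
    using conditions reciprocal_sum_lt_one[of a b v] assms by fastforce
  then have "(v - 1) * (b - 6) = 3"
    using conditions equation_at_a_eq_2_iff[of v b] assms(4,5) by simp
  then have "v = 2 \<and> b = 9 \<or> v = 4 \<and> b = 7"
    using mult_eq_3_solutions assms(3) by blast
  then show "(a, b, u * v - 1) \<in> {(2, 9, 5), (2, 7, 11)}"
    using a assms(4) by auto
next
  assume "(a, b, u * v - 1) \<in> {(2, 9, 5), (2, 7, 11)}"
  then have "a = 2 \<and> b = 9 \<and> v = 2 \<or> a = 2 \<and> b = 7 \<and> v = 4"
    using assms(4) by auto
  then show "coprime a b \<and> coprime a (u * v - 1) \<and> coprime b (u * v - 1)
          \<and> 1 / real_of_int a + 1 / real_of_int b + real_of_int v / real_of_int (u * v - 1) > 1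
          \<and> v * a * b - 1 = (u * v - 1) * X"
    using assms(4,5) by (auto simp: coprime_iff_gcd_eq_1 gcd_non_0_int)
qed

end
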